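(* Let $A=(a(x),dF(x))$ and $B=(b(x),dF(x))$ be games. Then $f(p)=\exp\big(\int\log(pa(x)+(1-p)b(x))\,dF(x)\big)/e^r$ is concave on $[0,1]$.
   Context: A game is a pair $(a(x),dF(x))$ with $dF$ a probability measure on $\mathbb{R}$ and $a\ge0$ measurable with finite positive integral. A real $r$ is fixed; convention $\exp(-\infty)=0$. *)

theory Defs
  imports "HOL-Probability.Probability"
begin

definition game :: "(real \<Rightarrow> real) \<Rightarrow> real measure \<Rightarrow> bool" where
  "game a F \<longleftrightarrow> prob_space F \<and> sets F = sets borel \<and> a \<in> borel_measurable F \<and>
     (\<forall>x. 0 \<le> a x) \<and> integrable F a \<and> 0 < integral\<^sup>L F a"

text \<open>Extended-real valued integral of log g, where log 0 = -infinity: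
  (integral of the positive part) minus (integral of the negative part).\<close>
definition log_integral :: "real measure \<Rightarrow> (real \<Rightarrow> real) \<Rightarrow> ereal" where
  "log_integral F g =
     enn2ereal (\<integral>\<^sup>+ x. (if 0 < g x then ennreal (ln (g x)) else 0) \<partial>F)
   - enn2ereal (\<integral>\<^sup>+ x. (if 0 < g x then ennreal (- ln (g x)) else \<infinity>) \<partial>F)"

definition ext_exp :: "ereal \<Rightarrow> real" where
  "ext_exp e = (if e = - \<infinity> then 0 else exp (real_of_ereal e))"

end

theory Submission imports Defs
begin

text \<open>The geometric mean \<open>G(g) = exp (\<integral> ln g dF)\<close> is monotone, satisfies
  \<open>c G(g) \<le> G(c g)\<close> for \<open>c \<ge> 0\<close>, and is superadditive: if \<open>A = G(U)\<close> and \<open>B = G(V)\<close>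
  are positive, concavity of \<open>ln\<close> with weights \<open>A/(A+B)\<close>, \<open>B/(A+B)\<close> gives pointwise
  \<open>ln (U + V) \<ge> ln (A + B) + A/(A+B) ln (U/A) + B/(A+B) ln (V/B)\<close>, and the last two terms
  integrate to zero. Together, \<open>u G(U) + v G(V) \<le> G(u U + v V)\<close>; applied to the affine family
  \<open>p a + (1 - p) b\<close> this is the concavity of \<open>f\<close>.\<close>

lemma enn2ereal_eq_ereal_enn2real: "x < \<infinity> \<Longrightarrow> enn2ereal x = ereal (enn2real x)"
  by (cases x rule: ennreal_cases) auto

lemma ext_exp_log_integral_eq_exp_integral:
  assumes "AE x in F. 0 < g x" and "integrable F (\<lambda>x. ln (g x))"
  shows "ext_exp (log_integral F g) = exp (\<integral>x. ln (g x) \<partial>F)"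
proof -
  let ?P = "\<integral>\<^sup>+x. ennreal (ln (g x)) \<partial>F" and ?N = "\<integral>\<^sup>+x. ennreal (- ln (g x)) \<partial>F"
  have "(\<integral>\<^sup>+x. (if 0 < g x then ennreal (ln (g x)) else 0) \<partial>F) = ?P"
    and "(\<integral>\<^sup>+x. (if 0 < g x then ennreal (- ln (g x)) else \<infinity>) \<partial>F) = ?N"
    by (rule nn_integral_cong_AE, use assms(1) in auto)+
  moreover have "?P < \<infinity>" "?N < \<infinity>"
    using integrableD[OF assms(2)] by (auto simp: less_top)
  ultimately have "log_integral F g = ereal (enn2real ?P - enn2real ?N)"
    by (simp add: log_integral_def enn2ereal_eq_ereal_enn2real)
  then show ?thesis
    by (simp add: ext_exp_def real_lebesgue_integral_def[OF assms(2)])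
qed

lemma ext_exp_log_integral_nonzeroD:
  assumes "integrable F g" and "ext_exp (log_integral F g) \<noteq> 0"
  shows "AE x in F. 0 < g x" and "integrable F (\<lambda>x. ln (g x))"
proof -
  let ?P = "\<integral>\<^sup>+x. (if 0 < g x then ennreal (ln (g x)) else 0) \<partial>F"
  let ?N = "\<integral>\<^sup>+x. (if 0 < g x then ennreal (- ln (g x)) else \<infinity>) \<partial>F"
  have g_meas: "g \<in> borel_measurable F"
    using assms(1) by simp
  have "?P \<le> (\<integral>\<^sup>+x. ennreal (norm (g x)) \<partial>F)"
    by (intro nn_integral_mono) (auto intro!: ennreal_leI less_imp_le)
  also have "\<dots> < \<infinity>"
    using assms(1) by (simp add: integrable_iff_bounded)
  finally have P_fin: "?P < \<infinity>" .
  have N_fin: "?N \<noteq> \<infinity>"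
  proof
    assume "?N = \<infinity>"
    with P_fin have "log_integral F g = - \<infinity>"
      by (simp add: log_integral_def enn2ereal_eq_ereal_enn2real)
    with assms(2) show False
      by (simp add: ext_exp_def)
  qed
  have "AE x in F. (if 0 < g x then ennreal (- ln (g x)) else \<infinity>) \<noteq> \<infinity>"
    by (rule nn_integral_PInf_AE[OF _ N_fin]) (use g_meas in measurable)
  then show pos: "AE x in F. 0 < g x"
    by (auto elim: AE_mp)
  have "?P = (\<integral>\<^sup>+x. ennreal (ln (g x)) \<partial>F)" "?N = (\<integral>\<^sup>+x. ennreal (- ln (g x)) \<partial>F)"
    by (rule nn_integral_cong_AE, use pos in auto)+
  with P_fin N_fin g_meas show "integrable F (\<lambda>x. ln (g x))"
    by (auto simp: real_integrable_def)
qed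

lemma exp_integral_le_ext_exp_log_integral:
  assumes "integrable F g" and "AE x in F. 0 < g x"
    and "integrable F h" and "AE x in F. h x \<le> ln (g x)"
  shows "exp (\<integral>x. h x \<partial>F) \<le> ext_exp (log_integral F g)"
proof -
  have "integrable F (\<lambda>x. \<bar>g x\<bar> + \<bar>h x\<bar>)"
    using assms(1,3) by auto
  moreover have "(\<lambda>x. ln (g x)) \<in> borel_measurable F"
    using borel_measurable_integrable[OF assms(1)] by measurable
  moreover have "AE x in F. norm (ln (g x)) \<le> norm (\<bar>g x\<bar> + \<bar>h x\<bar>)"
    using assms(2,4) by eventually_elim (smt (verit) ln_less_self real_norm_def)
  ultimately have ln_int: "integrable F (\<lambda>x. ln (g x))"
    by (rule Bochner_Integration.integrable_bound)
  have "(\<integral>x. h x \<partial>F) \<le> (\<integral>x. ln (g x) \<partial>F)"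
    using assms(3) ln_int assms(4) by (rule integral_mono_AE)
  then show ?thesis
    using ext_exp_log_integral_eq_exp_integral[OF assms(2) ln_int] by simp
qed

lemma ext_exp_log_integral_mono:
  assumes "integrable F g" "integrable F h" and "AE x in F. g x \<le> h x"
  shows "ext_exp (log_integral F g) \<le> ext_exp (log_integral F h)"
proof (cases "ext_exp (log_integral F g) = 0")
  case True
  then show ?thesis by (simp add: ext_exp_def)
next
  case False
  note g_pos = ext_exp_log_integral_nonzeroD(1)[OF assms(1) False]
  note ln_g_int = ext_exp_log_integral_nonzeroD(2)[OF assms(1) False]
  have "AE x in F. 0 < h x \<and> ln (g x) \<le> ln (h x)"
    using g_pos assms(3) by eventually_elim auto
  then have "exp (\<integral>x. ln (g x) \<partial>F) \<le> ext_exp (log_integral F h)"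
    using assms(2) ln_g_int by (intro exp_integral_le_ext_exp_log_integral) auto
  then show ?thesis
    using ext_exp_log_integral_eq_exp_integral[OF g_pos ln_g_int] by simp
qed

lemma ln_add_ge_weighted:
  fixes A B X Y :: real
  assumes "0 < A" "0 < B" "0 < X" "0 < Y"
  shows "ln (A + B) + A / (A + B) * (ln X - ln A) + B / (A + B) * (ln Y - ln B) \<le> ln (X + Y)"
proof -
  define l where "l = B / (A + B)"
  have l: "0 < l" "l < 1" "1 - l = A / (A + B)"
    using assms by (auto simp: l_def field_simps)
  have "(1 - l) * ln (X / (1 - l)) + l * ln (Y / l) \<le> ln ((1 - l) * (X / (1 - l)) + l * (Y / l))"
    using concave_onD[OF ln_concave, of l "X / (1 - l)" "Y / l"] assms l(1,2) by simp
  also have "(1 - l) * (X / (1 - l)) + l * (Y / l) = X + Y"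
    using l(1,2) by simp
  also have "ln (X / (1 - l)) = ln X - ln A + ln (A + B)"
    unfolding l(3) using assms by (simp add: ln_divide_pos ln_mult_pos)
  also have "ln (Y / l) = ln Y - ln B + ln (A + B)"
    unfolding l_def using assms by (simp add: ln_divide_pos ln_mult_pos)
  finally have "ln (A + B) + (1 - l) * (ln X - ln A) + l * (ln Y - ln B) \<le> ln (X + Y)"
    by (simp add: algebra_simps)
  then show ?thesis
    unfolding l(3) by (simp add: l_def)
qed

lemma mult_ext_exp_log_integral_le:
  assumes "prob_space F" and g: "integrable F g" and "0 \<le> c"
  shows "c * ext_exp (log_integral F g) \<le> ext_exp (log_integral F (\<lambda>x. c * g x))"
proof (cases "c = 0 \<or> ext_exp (log_integral F g) = 0")
  case True
  then show ?thesis by (auto simp: ext_exp_def)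
next
  case False
  interpret prob_space F by fact
  from False have c: "0 < c" and nz: "ext_exp (log_integral F g) \<noteq> 0"
    using \<open>0 \<le> c\<close> by auto
  note g_pos = ext_exp_log_integral_nonzeroD(1)[OF g nz]
  note ln_g_int = ext_exp_log_integral_nonzeroD(2)[OF g nz]
  have "AE x in F. 0 < c * g x \<and> ln c + ln (g x) \<le> ln (c * g x)"
    using g_pos by eventually_elim (simp add: ln_mult_pos c)
  then have "exp (\<integral>x. ln c + ln (g x) \<partial>F) \<le> ext_exp (log_integral F (\<lambda>x. c * g x))"
    using g ln_g_int by (intro exp_integral_le_ext_exp_log_integral) auto
  then show ?thesis
    using ln_g_int c by (simp add: ext_exp_log_integral_eq_exp_integral[OF g_pos ln_g_int] exp_add prob_space)
qed

lemma ext_exp_log_integral_superadditive: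
  assumes "prob_space F"
    and U: "integrable F U" "\<And>x. 0 \<le> U x" and V: "integrable F V" "\<And>x. 0 \<le> V x"
  shows "ext_exp (log_integral F U) + ext_exp (log_integral F V)
           \<le> ext_exp (log_integral F (\<lambda>x. U x + V x))"
proof -
  have mono_U: "ext_exp (log_integral F U) \<le> ext_exp (log_integral F (\<lambda>x. U x + V x))"
    and mono_V: "ext_exp (log_integral F V) \<le> ext_exp (log_integral F (\<lambda>x. U x + V x))"
    using U V by (auto intro!: ext_exp_log_integral_mono)
  consider "ext_exp (log_integral F U) = 0" | "ext_exp (log_integral F V) = 0"
    | "ext_exp (log_integral F U) \<noteq> 0" "ext_exp (log_integral F V) \<noteq> 0"
    by blast
  then show ?thesis
  proof cases
    case 3
    interpret prob_space F by fact
    note U_pos = ext_exp_log_integral_nonzeroD(1)[OF U(1) 3(1)]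
      and ln_U_int = ext_exp_log_integral_nonzeroD(2)[OF U(1) 3(1)]
      and V_pos = ext_exp_log_integral_nonzeroD(1)[OF V(1) 3(2)]
      and ln_V_int = ext_exp_log_integral_nonzeroD(2)[OF V(1) 3(2)]
    define A where "A = exp (\<integral>x. ln (U x) \<partial>F)"
    define B where "B = exp (\<integral>x. ln (V x) \<partial>F)"
    have A: "0 < A" and B: "0 < B"
      by (simp_all add: A_def B_def)
    define h where "h x = ln (A + B) + A / (A + B) * (ln (U x) - ln A)
                            + B / (A + B) * (ln (V x) - ln B)" for x
    have "(\<integral>x. h x \<partial>F) = ln (A + B)"
      using ln_U_int ln_V_int by (simp add: h_def A_def B_def prob_space)
    moreover have "exp (\<integral>x. h x \<partial>F) \<le> ext_exp (log_integral F (\<lambda>x. U x + V x))"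
    proof (rule exp_integral_le_ext_exp_log_integral)
      show "AE x in F. 0 < U x + V x"
        using U_pos by eventually_elim (simp add: add_pos_nonneg V(2))
      show "AE x in F. h x \<le> ln (U x + V x)"
        using U_pos V_pos by eventually_elim (unfold h_def, rule ln_add_ge_weighted[OF A B])
    qed (use U V ln_U_int ln_V_int in \<open>auto simp: h_def\<close>)
    moreover have "ext_exp (log_integral F U) = A" "ext_exp (log_integral F V) = B"
      by (simp_all add: A_def B_def ext_exp_log_integral_eq_exp_integral U_pos V_pos ln_U_int ln_V_int)
    ultimately show ?thesis
      using A B by simp
  qed (use mono_U mono_V in simp_all)
qed

lemma ext_exp_log_integral_convex_combination:
  assumes F: "prob_space F" and U: "integrable F U" "\<And>x. 0 \<le> U x"
    and V: "integrable F V" "\<And>x. 0 \<le> V x" and "0 \<le> u" "0 \<le> v"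
  shows "u * ext_exp (log_integral F U) + v * ext_exp (log_integral F V)
           \<le> ext_exp (log_integral F (\<lambda>x. u * U x + v * V x))"
proof -
  have "u * ext_exp (log_integral F U) \<le> ext_exp (log_integral F (\<lambda>x. u * U x))"
    and "v * ext_exp (log_integral F V) \<le> ext_exp (log_integral F (\<lambda>x. v * V x))"
    using F U(1) V(1) \<open>0 \<le> u\<close> \<open>0 \<le> v\<close> by (simp_all add: mult_ext_exp_log_integral_le)
  moreover have "ext_exp (log_integral F (\<lambda>x. u * U x)) + ext_exp (log_integral F (\<lambda>x. v * V x))
      \<le> ext_exp (log_integral F (\<lambda>x. u * U x + v * V x))"
    using U V \<open>0 \<le> u\<close> \<open>0 \<le> v\<close> by (intro ext_exp_log_integral_superadditive[OF F]) auto
  ultimately show ?thesis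
    by linarith
qed

theorem lemmaD8:
  fixes F :: "real measure" and a b :: "real \<Rightarrow> real" and r :: real
  assumes "game a F" and "game b F"
  shows "concave_on {0..1}
           (\<lambda>p. ext_exp (log_integral F (\<lambda>x. p * a x + (1 - p) * b x)) / exp r)"
proof (rule concave_on_cdiv)
  have F: "prob_space F" and a: "integrable F a" "\<And>x. 0 \<le> a x"
    and b: "integrable F b" "\<And>x. 0 \<le> b x"
    using assms by (simp_all add: game_def)
  define mix where "mix p x = p * a x + (1 - p) * b x" for p x
  have mix_int: "integrable F (mix p)" for p
    unfolding mix_def using a b by auto
  have mix_nonneg: "0 \<le> mix p x" if "p \<in> {0..1}" for p x
    using a b that by (simp add: mix_def)
  have "u * ext_exp (log_integral F (mix p)) + v * ext_exp (log_integral F (mix q))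
          \<le> ext_exp (log_integral F (mix (u * p + v * q)))"
    if "p \<in> {0..1}" "q \<in> {0..1}" "0 \<le> u" "0 \<le> v" "u + v = 1" for p q u v
  proof -
    have v: "v = 1 - u"
      using that by simp
    have "mix (u * p + v * q) = (\<lambda>x. u * mix p x + v * mix q x)"
      unfolding v mix_def by (simp add: fun_eq_iff algebra_simps)
    then show ?thesis
      using that F mix_int mix_nonneg by (simp add: ext_exp_log_integral_convex_combination)
  qed
  then show "concave_on {0..1} (\<lambda>p. ext_exp (log_integral F (\<lambda>x. p * a x + (1 - p) * b x)))"
    unfolding concave_on_iff mix_def by simp
qed simp

end
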